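(* Let $t$ be a positive multiple of $12$ and let $n=t^2+1$. There exists a tree $T$ on $n$ vertices such that, for every (deterministic) strategy of the cat in the Cat and Mouse game on $T$, there is a sequence of mouse positions $(m_i)_{i\ge1}$ such that $\mathrm{rad}_T(M_i)>t/12$ for every $i$; that is, the mouse avoids being localised up to distance $t/12$ forever.
   Context: The Cat and Mouse game is played on a simple, undirected, connected graph $G$ in time steps $i=1,2,\dots$. The mouse occupies vertices $m_1,m_2,\dots$, where for $i\ge2$, $m_i$ equals $m_{i-1}$ or is a neighbour of $m_{i-1}$. At time $i$ the cat tests an arbitrary vertex $c_i$; for $i\ge2$ it is told $b_i=1$ if $d(c_i,m_i)\le d(c_{i-1},m_{i-1})$ and $b_i=0$ otherwise ($d$ = graph distance). A cat strategy is $(c_1,c_2,f)$ with $f:\bigcup_{i\in\mathbb N}\{0,1\}^i\to V(G)$ and $c_i=f(b_2,\dots,b_{i-1})$ for $i\ge3$; it is deterministic, fixed in advance, and known to the mouse (so the mouse's sequence may depend on it). $M_i$ is the set of vertices $v$ for which there exist $\tilde m_1,\dots,\tilde m_i$ with $\tilde m_i=v$, each $\tilde m_j$ in the closed neighbourhood of $\tilde m_{j-1}$, and for each $2\le j\le i$: $d(c_j,\tilde m_j)\le d(c_{j-1},\tilde m_{j-1})$ iff $b_j=1$. $\mathrm{rad}_G(W)=\min_{v\in V(G)}\max_{w\in W}d(v,w)$. *)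

theory Defs
  imports Complex_Main
begin

definition simple_graph :: "'a set \<Rightarrow> ('a \<Rightarrow> 'a \<Rightarrow> bool) \<Rightarrow> bool" where
  "simple_graph V E \<longleftrightarrow> finite V \<and> (\<forall>u v. E u v \<longrightarrow> u \<in> V \<and> v \<in> V \<and> u \<noteq> v \<and> E v u)"

definition walk :: "('a \<Rightarrow> 'a \<Rightarrow> bool) \<Rightarrow> 'a list \<Rightarrow> bool" where
  "walk E xs \<longleftrightarrow> xs \<noteq> [] \<and> (\<forall>i. Suc i < length xs \<longrightarrow> E (xs ! i) (xs ! Suc i))"

definition connected_graph :: "'a set \<Rightarrow> ('a \<Rightarrow> 'a \<Rightarrow> bool) \<Rightarrow> bool" where
  "connected_graph V E \<longleftrightarrow> (\<forall>u\<in>V. \<forall>v\<in>V. \<exists>xs. walk E xs \<and> hd xs = u \<and> last xs = v)"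

definition has_cycle :: "('a \<Rightarrow> 'a \<Rightarrow> bool) \<Rightarrow> bool" where
  "has_cycle E \<longleftrightarrow> (\<exists>xs. walk E xs \<and> distinct xs \<and> length xs \<ge> 3 \<and> E (last xs) (hd xs))"

definition is_tree :: "'a set \<Rightarrow> ('a \<Rightarrow> 'a \<Rightarrow> bool) \<Rightarrow> bool" where
  "is_tree V E \<longleftrightarrow> simple_graph V E \<and> V \<noteq> {} \<and> connected_graph V E \<and> \<not> has_cycle E"

definition gdist :: "('a \<Rightarrow> 'a \<Rightarrow> bool) \<Rightarrow> 'a \<Rightarrow> 'a \<Rightarrow> nat" where
  "gdist E u v = (LEAST k. \<exists>xs. walk E xs \<and> hd xs = u \<and> last xs = v \<and> length xs = Suc k)"

definition rad :: "'a set \<Rightarrow> ('a \<Rightarrow> 'a \<Rightarrow> bool) \<Rightarrow> 'a set \<Rightarrow> nat" where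
  "rad V E W = Min ((\<lambda>v. Max ((\<lambda>w. gdist E v w) ` W)) ` V)"

definition cat_strategy :: "'a set \<Rightarrow> 'a \<Rightarrow> 'a \<Rightarrow> (bool list \<Rightarrow> 'a) \<Rightarrow> bool" where
  "cat_strategy V c1 c2 f \<longleftrightarrow> c1 \<in> V \<and> c2 \<in> V \<and> (\<forall>bs. bs \<noteq> [] \<longrightarrow> f bs \<in> V)"

(* cat's test at time i, given the answers bs = [b_2,...,b_{i-1}] *)
definition cat_pos :: "'a \<Rightarrow> 'a \<Rightarrow> (bool list \<Rightarrow> 'a) \<Rightarrow> bool list \<Rightarrow> nat \<Rightarrow> 'a" where
  "cat_pos c1 c2 f bs i = (if i \<le> 1 then c1 else if i = 2 then c2 else f bs)"

(* answers: answers ... m i = [b_2, ..., b_i] (empty for i <= 1); mouse positions m 1, m 2, ... *)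
fun answers :: "('a \<Rightarrow> 'a \<Rightarrow> bool) \<Rightarrow> 'a \<Rightarrow> 'a \<Rightarrow> (bool list \<Rightarrow> 'a) \<Rightarrow> (nat \<Rightarrow> 'a) \<Rightarrow> nat \<Rightarrow> bool list" where
  "answers E c1 c2 f m 0 = []"
| "answers E c1 c2 f m (Suc 0) = []"
| "answers E c1 c2 f m (Suc (Suc k)) =
     answers E c1 c2 f m (Suc k) @
       [gdist E (cat_pos c1 c2 f (answers E c1 c2 f m (Suc k)) (Suc (Suc k))) (m (Suc (Suc k)))
        \<le> gdist E (cat_pos c1 c2 f (answers E c1 c2 f m k) (Suc k)) (m (Suc k))]"

definition cat_seq :: "('a \<Rightarrow> 'a \<Rightarrow> bool) \<Rightarrow> 'a \<Rightarrow> 'a \<Rightarrow> (bool list \<Rightarrow> 'a) \<Rightarrow> (nat \<Rightarrow> 'a) \<Rightarrow> nat \<Rightarrow> 'a" where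
  "cat_seq E c1 c2 f m i = cat_pos c1 c2 f (answers E c1 c2 f m (i - 1)) i"

definition bit_seq :: "('a \<Rightarrow> 'a \<Rightarrow> bool) \<Rightarrow> 'a \<Rightarrow> 'a \<Rightarrow> (bool list \<Rightarrow> 'a) \<Rightarrow> (nat \<Rightarrow> 'a) \<Rightarrow> nat \<Rightarrow> bool" where
  "bit_seq E c1 c2 f m i = (gdist E (cat_seq E c1 c2 f m i) (m i) \<le> gdist E (cat_seq E c1 c2 f m (i - 1)) (m (i - 1)))"

definition mouse_seq :: "'a set \<Rightarrow> ('a \<Rightarrow> 'a \<Rightarrow> bool) \<Rightarrow> (nat \<Rightarrow> 'a) \<Rightarrow> bool" where
  "mouse_seq V E m \<longleftrightarrow> (\<forall>i\<ge>1. m i \<in> V \<and> (m (Suc i) = m i \<or> E (m i) (m (Suc i))))"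

(* M_i: vertices consistent with all answers b_2..b_i received so far *)
definition Mset :: "'a set \<Rightarrow> ('a \<Rightarrow> 'a \<Rightarrow> bool) \<Rightarrow> 'a \<Rightarrow> 'a \<Rightarrow> (bool list \<Rightarrow> 'a) \<Rightarrow> (nat \<Rightarrow> 'a) \<Rightarrow> nat \<Rightarrow> 'a set" where
  "Mset V E c1 c2 f m i = {v. \<exists>m'. m' i = v \<and> (\<forall>j. 1 \<le> j \<and> j \<le> i \<longrightarrow> m' j \<in> V)
      \<and> (\<forall>j. 2 \<le> j \<and> j \<le> i \<longrightarrow>
            (m' j = m' (j - 1) \<or> E (m' (j - 1)) (m' j))
          \<and> ((gdist E (cat_seq E c1 c2 f m j) (m' j) \<le> gdist E (cat_seq E c1 c2 f m (j - 1)) (m' (j - 1)))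
               \<longleftrightarrow> bit_seq E c1 c2 f m j))}"

end

theory Submission
  imports Defs
begin

text \<open>The tree is a spider: \<open>t\<close> legs of length \<open>t\<close> joined at a centre. The mouse stays at the
  centre or makes excursions of depth one onto legs the cat is not testing, so every answer is
  determined by the depths of cat and mouse. A second, shadow mouse on a leg that the cat does
  not test during a window of fewer than \<open>t\<close> steps can adjust its depth so as to receive
  exactly the same answers. The mouse's moves are chosen by a small automaton which guarantees,
  via a potential function, that the shadow gains depth at rate at least one half; after
  \<open>4 q + 3\<close> steps (where \<open>t = 12 q\<close>) it is at distance \<open>2 q + 1\<close> from the mouse. Both
  positions are consistent with all answers, so the radius of \<open>M\<^sub>i\<close> exceeds \<open>q = t / 12\<close>.\<close>

lemma walk_Cons_iff: "xs \<noteq> [] \<Longrightarrow> walk E (x # xs) \<longleftrightarrow> E x (hd xs) \<and> walk E xs"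
  by (cases xs) (auto simp: walk_def nth_Cons split: nat.splits)

lemma walk_nth: "walk E xs \<Longrightarrow> Suc i < length xs \<Longrightarrow> E (xs ! i) (xs ! Suc i)"
  by (simp add: walk_def)

lemma walk_length_ge_metric:
  fixes d :: "'a \<Rightarrow> 'a \<Rightarrow> nat"
  assumes edge: "\<And>x y. E x y \<Longrightarrow> d x y \<le> 1"
    and zero: "\<And>x. d x x = 0"
    and triangle: "\<And>x y z. d x y \<le> d x z + d z y"
    and "walk E xs"
  shows "d (hd xs) (last xs) \<le> length xs - 1"
  using \<open>walk E xs\<close>
proof (induction xs)
  case (Cons x xs)
  show ?case
  proof (cases "xs = []")
    case False
    with Cons.prems have "E x (hd xs)" "walk E xs" by (auto simp: walk_Cons_iff)
    with Cons.IH edge have "d x (hd xs) \<le> 1" "d (hd xs) (last xs) \<le> length xs - 1" by auto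
    with triangle[of x "last xs" "hd xs"] False show ?thesis by (cases xs) auto
  qed (simp add: zero)
qed (simp add: walk_def)

lemma walk_of_metric_length:
  fixes d :: "'a \<Rightarrow> 'a \<Rightarrow> nat"
  assumes zero: "\<And>x. d x x = 0"
    and eq: "\<And>u v. u \<in> V \<Longrightarrow> v \<in> V \<Longrightarrow> d u v = 0 \<Longrightarrow> u = v"
    and geodesic: "\<And>u v. u \<in> V \<Longrightarrow> v \<in> V \<Longrightarrow> u \<noteq> v \<Longrightarrow>
                     \<exists>w\<in>V. E u w \<and> d w v + 1 = d u v"
    and "u \<in> V" "v \<in> V"
  shows "\<exists>xs. walk E xs \<and> hd xs = u \<and> last xs = v \<and> length xs = Suc (d u v)"
  using \<open>u \<in> V\<close>
proof (induction "d u v" arbitrary: u)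
  case 0
  with eq \<open>v \<in> V\<close> have "u = v" by metis
  with 0 show ?case by (intro exI[of _ "[u]"]) (simp add: walk_def)
next
  case (Suc n)
  then have "u \<noteq> v" using zero[of v] by auto
  with geodesic[OF Suc.prems \<open>v \<in> V\<close>] obtain w where w: "w \<in> V" "E u w" "d w v + 1 = d u v"
    by blast
  with Suc.hyps(2) have "n = d w v" by simp
  with Suc.hyps(1) w(1) obtain xs where "walk E xs" "hd xs = w" "last xs = v" "length xs = Suc n"
    by blast
  with w Suc.hyps(2) show ?case
    by (intro exI[of _ "u # xs"]) (auto simp: walk_Cons_iff)
qed

lemma gdist_eq_metric:
  fixes d :: "'a \<Rightarrow> 'a \<Rightarrow> nat"
  assumes edge: "\<And>x y. E x y \<Longrightarrow> d x y \<le> 1"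
    and zero: "\<And>x. d x x = 0"
    and triangle: "\<And>x y z. d x y \<le> d x z + d z y"
    and eq: "\<And>u v. u \<in> V \<Longrightarrow> v \<in> V \<Longrightarrow> d u v = 0 \<Longrightarrow> u = v"
    and geodesic: "\<And>u v. u \<in> V \<Longrightarrow> v \<in> V \<Longrightarrow> u \<noteq> v \<Longrightarrow>
                     \<exists>w\<in>V. E u w \<and> d w v + 1 = d u v"
    and "u \<in> V" "v \<in> V"
  shows "gdist E u v = d u v"
  unfolding gdist_def
proof (rule Least_equality)
  show "\<exists>xs. walk E xs \<and> hd xs = u \<and> last xs = v \<and> length xs = Suc (d u v)"
    by (rule walk_of_metric_length[OF zero eq geodesic \<open>u \<in> V\<close> \<open>v \<in> V\<close>])
qed (use walk_length_ge_metric[OF edge zero triangle] in fastforce)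

lemma not_has_cycle_if_unique_parent:
  fixes h :: "'a \<Rightarrow> nat"
  assumes sym: "\<And>x y. E x y \<Longrightarrow> E y x"
    and level: "\<And>x y. E x y \<Longrightarrow> h x = h y + 1 \<or> h y = h x + 1"
    and parent: "\<And>x y z. E x y \<Longrightarrow> E x z \<Longrightarrow> h y < h x \<Longrightarrow> h z < h x \<Longrightarrow> y = z"
  shows "\<not> has_cycle E"
proof
  assume "has_cycle E"
  then obtain xs where walk: "walk E xs" and dist: "distinct xs" and len: "length xs \<ge> 3"
    and closing: "E (last xs) (hd xs)" unfolding has_cycle_def by blast
  define n where "n = length xs"
  have "xs \<noteq> []" using len by auto
  then have xs_nth: "hd xs = xs ! 0" "last xs = xs ! (n - 1)"
    by (simp_all add: n_def hd_conv_nth last_conv_nth)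
  text \<open>A vertex of maximal height on the cycle has two distinct lower neighbours on it.\<close>
  obtain i where i: "i < n" "\<And>j. j < n \<Longrightarrow> h (xs ! j) \<le> h (xs ! i)"
  proof -
    have "finite (h ` set xs)" "h ` set xs \<noteq> {}" using len by auto
    then have "Max (h ` set xs) \<in> h ` set xs" by (rule Max_in)
    then obtain i where "i < n" "h (xs ! i) = Max (h ` set xs)"
      by (auto simp: n_def in_set_conv_nth)
    moreover have "h (xs ! j) \<le> Max (h ` set xs)" if "j < n" for j
      using that by (simp add: n_def)
    ultimately show ?thesis using that by metis
  qed
  define p where "p = (if i = 0 then n - 1 else i - 1)"
  define q where "q = (if i = n - 1 then 0 else i + 1)"
  have "p < n" "q < n" "p \<noteq> q" using i(1) len by (auto simp: p_def q_def n_def)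
  have "E (xs ! i) (xs ! p)"
    using walk_nth[OF walk, of "i - 1"] closing sym i(1) xs_nth by (auto simp: p_def n_def)
  moreover have "E (xs ! i) (xs ! q)"
    using walk_nth[OF walk, of i] closing i(1) xs_nth by (auto simp: q_def n_def)
  moreover have "h (xs ! p) < h (xs ! i)"
    using level[OF \<open>E (xs ! i) (xs ! p)\<close>] i(2)[OF \<open>p < n\<close>] by linarith
  moreover have "h (xs ! q) < h (xs ! i)"
    using level[OF \<open>E (xs ! i) (xs ! q)\<close>] i(2)[OF \<open>q < n\<close>] by linarith
  ultimately have "xs ! p = xs ! q" by (rule parent)
  with dist \<open>p < n\<close> \<open>q < n\<close> \<open>p \<noteq> q\<close> show False by (simp add: n_def nth_eq_iff_index_eq)
qed

text \<open>The spider with \<open>t\<close> legs of length \<open>t\<close> on the vertex set \<open>{..<t^2+1}\<close>: vertex \<open>0\<close> is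
  the centre and \<open>L * t + d\<close> (with \<open>L < t\<close>, \<open>1 \<le> d \<le> t\<close>) is the vertex at depth \<open>d\<close> on leg \<open>L\<close>.\<close>

definition spider_depth :: "nat \<Rightarrow> nat \<Rightarrow> nat" where
  "spider_depth t v = (if v = 0 then 0 else (v - 1) mod t + 1)"

definition spider_leg :: "nat \<Rightarrow> nat \<Rightarrow> nat" where
  "spider_leg t v = (v - 1) div t"

definition spider_vertex :: "nat \<Rightarrow> nat \<Rightarrow> nat \<Rightarrow> nat" where
  "spider_vertex t L d = (if d = 0 then 0 else L * t + d)"

definition spider_dist :: "nat \<Rightarrow> nat \<Rightarrow> nat \<Rightarrow> nat" where
  "spider_dist t u v =
     (if u = 0 \<or> v = 0 \<or> spider_leg t u \<noteq> spider_leg t v then spider_depth t u + spider_depth t v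
      else max (spider_depth t u) (spider_depth t v) - min (spider_depth t u) (spider_depth t v))"

definition spider_adj :: "nat \<Rightarrow> nat \<Rightarrow> nat \<Rightarrow> bool" where
  "spider_adj t u v \<longleftrightarrow> u < t^2+1 \<and> v < t^2+1 \<and> spider_dist t u v = 1"

lemma spider_depth_eq_0_iff [simp]: "spider_depth t v = 0 \<longleftrightarrow> v = 0"
  by (simp add: spider_depth_def)

lemma spider_depth_le: "0 < t \<Longrightarrow> spider_depth t v \<le> t"
  by (simp add: spider_depth_def Suc_leI)

lemma spider_leg_less: "0 < t \<Longrightarrow> v < t^2+1 \<Longrightarrow> spider_leg t v < t"
proof -
  assume "0 < t" "v < t^2+1"
  then have "v - 1 < t * t" by (cases v) (simp_all add: power2_eq_square)
  with \<open>0 < t\<close> show ?thesis by (simp add: spider_leg_def div_less_iff_less_mult)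
qed

lemma spider_vertex_coordinates [simp]: "spider_vertex t (spider_leg t v) (spider_depth t v) = v"
proof (cases v)
  case (Suc w)
  then show ?thesis
    using div_mult_mod_eq[of w t] by (simp add: spider_vertex_def spider_leg_def spider_depth_def)
qed (simp add: spider_vertex_def)

lemma spider_depth_vertex [simp]: "d \<le> t \<Longrightarrow> spider_depth t (spider_vertex t L d) = d"
  by (cases d) (auto simp: spider_vertex_def spider_depth_def)

lemma spider_leg_vertex [simp]: "0 < d \<Longrightarrow> d \<le> t \<Longrightarrow> spider_leg t (spider_vertex t L d) = L"
  by (cases d) (auto simp: spider_vertex_def spider_leg_def)

lemma spider_vertex_eq_0_iff [simp]: "spider_vertex t L d = 0 \<longleftrightarrow> d = 0"
  by (simp add: spider_vertex_def)

lemma spider_vertex_less: "L < t \<Longrightarrow> d \<le> t \<Longrightarrow> spider_vertex t L d < t^2+1"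
proof -
  assume "L < t" "d \<le> t"
  then have "L * t + d \<le> (t - 1) * t + t" by (intro add_mono mult_right_mono) auto
  also have "\<dots> = t^2" using \<open>L < t\<close> by (cases t) (auto simp: power2_eq_square)
  finally show ?thesis by (simp add: spider_vertex_def)
qed

lemma spider_dist_vertex:
  assumes "d \<le> t" "d' \<le> t"
  shows "spider_dist t (spider_vertex t L d) (spider_vertex t L' d') =
           (if L = L' then max d d' - min d d' else d + d')"
  using assms by (cases "d = 0 \<or> d' = 0") (auto simp: spider_dist_def)

lemma spider_dist_self [simp]: "spider_dist t u u = 0"
  by (simp add: spider_dist_def)

lemma spider_dist_commute: "spider_dist t u v = spider_dist t v u"
  by (auto simp: spider_dist_def)

lemma spider_dist_triangle: "spider_dist t u w \<le> spider_dist t u v + spider_dist t v w"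
  by (auto simp: spider_dist_def)

lemma spider_dist_eq_0_iff: "spider_dist t u v = 0 \<longleftrightarrow> u = v"
proof
  assume dist: "spider_dist t u v = 0"
  show "u = v"
  proof (cases "u = 0 \<or> v = 0 \<or> spider_leg t u \<noteq> spider_leg t v")
    case True
    with dist show ?thesis by (simp add: spider_dist_def)
  next
    case False
    with dist have "spider_depth t u = spider_depth t v" by (simp add: spider_dist_def)
    with False have "spider_vertex t (spider_leg t u) (spider_depth t u) =
        spider_vertex t (spider_leg t v) (spider_depth t v)" by simp
    then show ?thesis by simp
  qed
qed simp

lemma spider_dist_other_leg:
  "u = 0 \<or> v = 0 \<or> spider_leg t u \<noteq> spider_leg t v \<Longrightarrow>
     spider_dist t u v = spider_depth t u + spider_depth t v"
  by (auto simp: spider_dist_def)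

lemma spider_geodesic_neighbour:
  assumes "0 < t" "u \<in> {..<t^2+1}" "v \<in> {..<t^2+1}" "u \<noteq> v"
  shows "\<exists>w\<in>{..<t^2+1}. spider_adj t u w \<and> spider_dist t w v + 1 = spider_dist t u v"
proof -
  define Lu du Lv dv
    where "Lu = spider_leg t u" "du = spider_depth t u" "Lv = spider_leg t v" "dv = spider_depth t v"
  have u: "u = spider_vertex t Lu du" and v: "v = spider_vertex t Lv dv"
    by (simp_all add: Lu_du_Lv_dv_def)
  have bounds: "Lu < t" "du \<le> t" "Lv < t" "dv \<le> t"
    using assms by (simp_all add: Lu_du_Lv_dv_def spider_leg_less spider_depth_le)
  have distinct: "du \<noteq> dv \<or> (Lu \<noteq> Lv \<and> du \<noteq> 0)"
    using \<open>u \<noteq> v\<close> unfolding u v by (auto simp: spider_vertex_def split: if_splits)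
  show ?thesis
  proof (cases "(du = 0 \<or> Lu = Lv) \<and> du < dv")
    case True
    define w where "w = spider_vertex t Lv (du + 1)"
    have "w < t^2+1" using True bounds unfolding w_def by (intro spider_vertex_less) auto
    moreover have "spider_dist t u w = 1" "spider_dist t w v + 1 = spider_dist t u v"
      using True bounds unfolding w_def u v by (auto simp: spider_dist_vertex)
    ultimately show ?thesis using assms(2) by (auto simp: spider_adj_def)
  next
    case False
    define w where "w = spider_vertex t Lu (du - 1)"
    have "w < t^2+1" using bounds unfolding w_def by (intro spider_vertex_less) auto
    moreover have "spider_dist t u w = 1" "spider_dist t w v + 1 = spider_dist t u v"
      using False bounds distinct unfolding w_def u v by (auto simp: spider_dist_vertex)
    ultimately show ?thesis using assms(2) by (auto simp: spider_adj_def)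
  qed
qed

lemma gdist_spider:
  assumes "0 < t" "u < t^2+1" "v < t^2+1"
  shows "gdist (spider_adj t) u v = spider_dist t u v"
proof (rule gdist_eq_metric[where V = "{..<t^2+1}", OF _ _ _ _ spider_geodesic_neighbour[OF \<open>0 < t\<close>]])
  fix x y assume "spider_adj t x y"
  then show "spider_dist t x y \<le> 1" by (simp add: spider_adj_def)
next
  fix u v assume "spider_dist t u v = 0"
  then show "u = v" by (simp add: spider_dist_eq_0_iff)
qed (use assms spider_dist_triangle in simp_all)

lemma spider_adj_depth:
  "spider_adj t u v \<Longrightarrow> spider_depth t u = spider_depth t v + 1 \<or> spider_depth t v = spider_depth t u + 1"
  by (auto simp: spider_adj_def spider_dist_def split: if_splits; arith)

lemma spider_adj_inward:
  assumes "0 < t" "spider_adj t x y" "spider_depth t y < spider_depth t x"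
  shows "y = spider_vertex t (spider_leg t x) (spider_depth t x - 1)"
proof (cases "y = 0")
  case True
  with assms show ?thesis by (auto simp: spider_adj_def spider_dist_def spider_vertex_def)
next
  case False
  then have "0 < spider_depth t y" by (simp add: spider_depth_def)
  have dist: "spider_dist t x y = 1" using assms(2) by (simp add: spider_adj_def)
  have leg: "spider_leg t y = spider_leg t x"
  proof (rule ccontr)
    assume "spider_leg t y \<noteq> spider_leg t x"
    then have "spider_dist t x y = spider_depth t x + spider_depth t y"
      by (simp add: spider_dist_other_leg)
    with dist \<open>0 < spider_depth t y\<close> assms(3) show False by linarith
  qed
  moreover have "spider_depth t x \<noteq> 0" using assms(3) by linarith
  ultimately have "spider_dist t x y = spider_depth t x - spider_depth t y"
    using False assms(3) by (simp add: spider_dist_def)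
  with dist have "spider_depth t y = spider_depth t x - 1" by linarith
  with leg show ?thesis by (metis spider_vertex_coordinates)
qed

lemma spider_adj_commute: "spider_adj t u v \<longleftrightarrow> spider_adj t v u"
  using spider_dist_commute[of t u v] by (auto simp: spider_adj_def)

lemma spider_eq_or_adj:
  "spider_dist t u v \<le> 1 \<Longrightarrow> u < t^2+1 \<Longrightarrow> v < t^2+1 \<Longrightarrow> u = v \<or> spider_adj t u v"
  using spider_dist_eq_0_iff[of t u v] by (auto simp: spider_adj_def)

lemma spider_depth_le_dist: "spider_depth t v \<le> spider_dist t u v + spider_depth t u"
  using spider_dist_triangle[of t 0 v u] spider_dist_commute[of t 0 u]
  by (simp add: spider_dist_def)

lemma is_tree_spider:
  assumes "0 < t"
  shows "is_tree {..<t^2+1} (spider_adj t)"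
  unfolding is_tree_def simple_graph_def connected_graph_def
proof (intro conjI allI impI ballI)
  fix u v assume "spider_adj t u v"
  then show "u \<in> {..<t^2+1}" "v \<in> {..<t^2+1}" "u \<noteq> v"
    by (auto simp: spider_adj_def)
  from \<open>spider_adj t u v\<close> show "spider_adj t v u" by (simp add: spider_adj_commute)
next
  fix u v assume uv: "u \<in> {..<t^2+1}" "v \<in> {..<t^2+1}"
  have "\<exists>xs. walk (spider_adj t) xs \<and> hd xs = u \<and> last xs = v \<and>
      length xs = Suc (spider_dist t u v)"
    by (rule walk_of_metric_length[OF spider_dist_self _ spider_geodesic_neighbour[OF assms] uv])
      (simp add: spider_dist_eq_0_iff)
  then show "\<exists>xs. walk (spider_adj t) xs \<and> hd xs = u \<and> last xs = v" by blast
next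
  show "\<not> has_cycle (spider_adj t)"
  proof (rule not_has_cycle_if_unique_parent[where h = "spider_depth t"])
    fix x y z
    assume "spider_adj t x y" "spider_adj t x z"
      and "spider_depth t y < spider_depth t x" "spider_depth t z < spider_depth t x"
    then show "y = z" using spider_adj_inward[OF assms] by metis
  qed (simp add: spider_adj_commute, erule spider_adj_depth)
qed (auto simp: lessThan_empty_iff)

lemma Mset_subset: "1 \<le> i \<Longrightarrow> Mset V E c1 c2 f m i \<subseteq> V"
  unfolding Mset_def by auto

lemma Mset_memberI:
  fixes p :: "nat \<Rightarrow> 'a"
  assumes "\<And>j. 1 \<le> j \<Longrightarrow> j \<le> i \<Longrightarrow> p j \<in> V"
    and "\<And>j. 2 \<le> j \<Longrightarrow> j \<le> i \<Longrightarrow> p j = p (j - 1) \<or> E (p (j - 1)) (p j)"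
    and "\<And>j. 2 \<le> j \<Longrightarrow> j \<le> i \<Longrightarrow>
           (gdist E (cat_seq E c1 c2 f m j) (p j) \<le> gdist E (cat_seq E c1 c2 f m (j - 1)) (p (j - 1)))
             \<longleftrightarrow> bit_seq E c1 c2 f m j"
  shows "p i \<in> Mset V E c1 c2 f m i"
  unfolding Mset_def using assms by blast

lemma mouse_in_Mset:
  assumes "mouse_seq V E m" "1 \<le> i"
  shows "m i \<in> Mset V E c1 c2 f m i"
proof (rule Mset_memberI)
  fix j :: nat assume "2 \<le> j"
  then have "Suc (j - 1) = j" "1 \<le> j - 1" by simp_all
  with assms(1) show "m j = m (j - 1) \<or> E (m (j - 1)) (m j)"
    unfolding mouse_seq_def by metis
qed (use assms(1) in \<open>auto simp: mouse_seq_def bit_seq_def\<close>)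

lemma dist_le_twice_rad:
  assumes "finite V" "W \<subseteq> V" "x \<in> W" "y \<in> W"
    and triangle: "\<And>v. v \<in> V \<Longrightarrow> gdist E x y \<le> gdist E v x + gdist E v y"
  shows "gdist E x y \<le> 2 * rad V E W"
proof -
  let ?ecc = "\<lambda>v. Max ((\<lambda>w. gdist E v w) ` W)"
  have "finite W" using assms(1,2) by (rule rev_finite_subset)
  have "rad V E W \<in> ?ecc ` V"
    unfolding rad_def using assms(1-3) by (intro Min_in) auto
  then obtain v where "v \<in> V" "rad V E W = ?ecc v" by blast
  moreover have "gdist E v x \<le> ?ecc v" "gdist E v y \<le> ?ecc v"
    using \<open>finite W\<close> assms(3,4) by auto
  ultimately show ?thesis using triangle[of v] by linarith
qed

lemma ex_less_notin_image:
  assumes "finite I" "card I < n"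
  shows "\<exists>L<n. L \<notin> g ` I"
proof (rule ccontr)
  assume "\<not> (\<exists>L<n. L \<notin> g ` I)"
  then have "{..<n} \<subseteq> g ` I" by auto
  then have "n \<le> card (g ` I)" using assms(1) by (metis card_lessThan card_mono finite_imageI)
  also have "\<dots> \<le> card I" by (rule card_image_le[OF assms(1)])
  finally show False using assms(2) by simp
qed

text \<open>The mouse's excursion automaton. Its state \<open>s \<le> 3\<close> counts the steps the mouse has spent
  at depth one (state \<open>0\<close>: at the centre); the input \<open>e\<close> is the decrease of the cat's depth.
  The mouse steps out when the cat's depth stays put, and stays out (for at most three steps)
  only while the cat moves one step deeper.\<close>

definition excursion_depth :: "nat \<Rightarrow> int" where
  "excursion_depth s = (if s = 0 then 0 else 1)"

definition excursion_next :: "nat \<Rightarrow> int \<Rightarrow> nat" where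
  "excursion_next s e =
     (if s = 0 then (if e = 0 then 1 else 0) else if e = -1 \<and> s < 3 then s + 1 else 0)"

definition excursion_potential :: "nat \<Rightarrow> int" where
  "excursion_potential s = (if s = 1 then 1 else if s = 3 then -1 else 0)"

text \<open>When the mouse's depth changes by \<open>d\<close> and the cat's depth decreases by \<open>e\<close>, a mouse on
  an unvisited leg whose depth changes by \<open>shadow_move d e\<close> receives the same answer.\<close>

definition shadow_move :: "int \<Rightarrow> int \<Rightarrow> int" where
  "shadow_move d e = (if d \<le> e then min 1 e else 1)"

lemma excursion_depth_bounds: "0 \<le> excursion_depth s" "excursion_depth s \<le> 1"
  by (simp_all add: excursion_depth_def)

lemma excursion_next_le_3: "excursion_next s e \<le> 3"
  by (simp add: excursion_next_def)

lemma excursion_potential_le_1: "excursion_potential s \<le> 1"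
  by (simp add: excursion_potential_def)

lemma shadow_move_bounds:
  assumes "-1 \<le> d" "d \<le> 1"
  shows "-1 \<le> shadow_move d e" "shadow_move d e \<le> 1"
    and "d \<le> shadow_move d e" "shadow_move d e \<le> d + 2"
  using assms by (auto simp: shadow_move_def)

lemma shadow_move_le_iff: "d \<le> 1 \<Longrightarrow> shadow_move d e \<le> e \<longleftrightarrow> d \<le> e"
  by (auto simp: shadow_move_def)

text \<open>The potential argument: twice the shadow's lead over the mouse plus
  \<open>excursion_potential\<close> grows by at least one in every step.\<close>

lemma excursion_gain:
  fixes e :: int
  assumes "s \<le> 3"
  defines "d \<equiv> excursion_depth (excursion_next s e) - excursion_depth s"
  shows "2 * (shadow_move d e - d) + excursion_potential (excursion_next s e) - excursion_potential s \<ge> 1"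
  using assms(1) unfolding d_def
  by (auto simp: excursion_next_def excursion_depth_def shadow_move_def excursion_potential_def)

locale spider_game =
  fixes t q c1 c2 :: nat and f :: "bool list \<Rightarrow> nat"
  assumes t_eq: "t = 12 * q" and q_pos: "0 < q"
    and strategy: "cat_strategy {..<t^2+1} c1 c2 f"
begin

lemma t_pos: "0 < t"
  using t_eq q_pos by simp

text \<open>The excursion state and the answers \<open>[b\<^sub>2, \<dots>, b\<^sub>i]\<close> are computed together, because the
  cat's next test depends on the answers and the answers depend on the mouse. The answer is
  computed from depths: the mouse sits on a leg the cat is not testing, so their distance is
  the sum of their depths.\<close>

fun play :: "nat \<Rightarrow> nat \<times> bool list" where
  "play 0 = (0, [])"
| "play (Suc 0) = (0, [])"
| "play (Suc (Suc k)) =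
    (let s = fst (play (Suc k)); bs = snd (play (Suc k));
         a = int (spider_depth t (cat_pos c1 c2 f (snd (play k)) (Suc k)));
         a' = int (spider_depth t (cat_pos c1 c2 f bs (Suc (Suc k))));
         s' = excursion_next s (a - a')
     in (s', bs @ [a' + excursion_depth s' \<le> a + excursion_depth s]))"

definition excursion :: "nat \<Rightarrow> nat" where
  "excursion i = fst (play i)"

definition replies :: "nat \<Rightarrow> bool list" where
  "replies i = snd (play i)"

definition cat :: "nat \<Rightarrow> nat" where
  "cat i = cat_pos c1 c2 f (replies (i - 1)) i"

definition cat_depth :: "nat \<Rightarrow> int" where
  "cat_depth i = int (spider_depth t (cat i))"

definition mouse_move :: "nat \<Rightarrow> int" where
  "mouse_move i = excursion_depth (excursion i) - excursion_depth (excursion (i - 1))"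

definition cat_rise :: "nat \<Rightarrow> int" where
  "cat_rise i = cat_depth (i - 1) - cat_depth i"

lemma play_0_1 [simp]:
  "excursion 0 = 0" "excursion (Suc 0) = 0" "replies 0 = []" "replies (Suc 0) = []"
  by (simp_all add: excursion_def replies_def)

lemma play_Suc_Suc:
  "excursion (Suc (Suc k)) = excursion_next (excursion (Suc k)) (cat_rise (Suc (Suc k)))"
  "replies (Suc (Suc k)) = replies (Suc k) @
     [cat_depth (Suc (Suc k)) + excursion_depth (excursion (Suc (Suc k))) \<le>
      cat_depth (Suc k) + excursion_depth (excursion (Suc k))]"
  by (simp_all add: excursion_def replies_def cat_rise_def cat_depth_def cat_def Let_def)

lemma excursion_next_step:
  "2 \<le> i \<Longrightarrow> excursion i = excursion_next (excursion (i - 1)) (cat_rise i)"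
  by (cases i rule: play.cases) (simp_all add: play_Suc_Suc(1))

lemma length_replies: "length (replies i) = i - 1"
  by (induction i rule: play.induct) (simp_all add: play_Suc_Suc(2))

lemma cat_in_V: "cat i < t^2+1"
proof -
  have "i \<ge> 3 \<Longrightarrow> replies (i - 1) \<noteq> []" using length_replies[of "i - 1"] by auto
  then show ?thesis using strategy by (auto simp: cat_def cat_pos_def cat_strategy_def)
qed

lemma excursion_le_3: "excursion i \<le> 3"
  by (cases i rule: play.cases) (simp_all add: play_Suc_Suc(1) excursion_next_le_3)

lemma excursion_began:
  "excursion i = Suc r \<Longrightarrow> Suc r < i \<and> excursion (i - Suc r) = 0"
proof (induction r arbitrary: i)
  case 0
  then obtain k where i: "i = Suc (Suc k)" by (cases i rule: play.cases) auto
  with 0 have "excursion (Suc k) = 0"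
    by (auto simp: play_Suc_Suc(1) excursion_next_def split: if_splits)
  with i show ?case by simp
next
  case (Suc r)
  then obtain k where i: "i = Suc (Suc k)" by (cases i rule: play.cases) auto
  with Suc.prems have "excursion (Suc k) = Suc r"
    by (auto simp: play_Suc_Suc(1) excursion_next_def split: if_splits)
  from Suc.IH[OF this] i show ?case by simp
qed

definition hiding_leg :: "nat \<Rightarrow> nat" where
  "hiding_leg j = (LEAST L. L < t \<and> L \<notin> (\<lambda>k. spider_leg t (cat k)) ` {j..j+2})"

lemma hiding_leg:
  shows "hiding_leg j < t"
    and "j \<le> k \<Longrightarrow> k \<le> j + 2 \<Longrightarrow> spider_leg t (cat k) \<noteq> hiding_leg j"
proof -
  have "card {j..j+2} < t" using t_eq q_pos by simp
  then have "\<exists>L<t. L \<notin> (\<lambda>k. spider_leg t (cat k)) ` {j..j+2}"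
    by (intro ex_less_notin_image) simp
  then have leg: "hiding_leg j < t \<and> hiding_leg j \<notin> (\<lambda>k. spider_leg t (cat k)) ` {j..j+2}"
    unfolding hiding_leg_def by (rule LeastI_ex)
  then show "hiding_leg j < t" by simp
  show "spider_leg t (cat k) \<noteq> hiding_leg j" if "j \<le> k" "k \<le> j + 2"
    using that leg by (metis atLeastAtMost_iff image_eqI)
qed

text \<open>An excursion in progress at time \<open>i\<close> started at time \<open>j = i + 1 - excursion i\<close> and
  lasts at most until \<open>j + 2\<close>, so it takes place on a leg the cat does not test meanwhile.\<close>

definition mouse :: "nat \<Rightarrow> nat" where
  "mouse i = (if excursion i = 0 then 0 else spider_vertex t (hiding_leg (i + 1 - excursion i)) 1)"

lemma mouse_in_V: "mouse i < t^2+1"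
  using spider_vertex_less[OF hiding_leg(1), of 1] t_pos by (simp add: mouse_def)

lemma mouse_depth: "int (spider_depth t (mouse i)) = excursion_depth (excursion i)"
  using t_pos by (simp add: mouse_def excursion_depth_def)

lemma dist_cat_mouse:
  "int (gdist (spider_adj t) (cat i) (mouse i)) = cat_depth i + excursion_depth (excursion i)"
proof -
  have "mouse i = 0 \<or> spider_leg t (cat i) \<noteq> spider_leg t (mouse i)"
  proof (cases "excursion i")
    case (Suc r)
    with excursion_began[OF this] excursion_le_3[of i]
    have "i + 1 - excursion i \<le> i" "i \<le> i + 1 - excursion i + 2" by auto
    with Suc t_pos show ?thesis by (simp add: mouse_def hiding_leg(2))
  qed (simp add: mouse_def)
  then have "spider_dist t (cat i) (mouse i) = spider_depth t (cat i) + spider_depth t (mouse i)"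
    by (auto intro: spider_dist_other_leg)
  with mouse_depth[of i] show ?thesis
    by (simp add: gdist_spider[OF t_pos cat_in_V mouse_in_V] cat_depth_def)
qed

lemma mouse_closer_iff:
  "gdist (spider_adj t) (cat i) (mouse i) \<le> gdist (spider_adj t) (cat j) (mouse j) \<longleftrightarrow>
     cat_depth i + excursion_depth (excursion i) \<le> cat_depth j + excursion_depth (excursion j)"
proof -
  have "gdist (spider_adj t) (cat i) (mouse i) \<le> gdist (spider_adj t) (cat j) (mouse j) \<longleftrightarrow>
      int (gdist (spider_adj t) (cat i) (mouse i)) \<le> int (gdist (spider_adj t) (cat j) (mouse j))"
    by (rule of_nat_le_iff[symmetric])
  then show ?thesis by (simp only: dist_cat_mouse)
qed

lemma answers_mouse: "answers (spider_adj t) c1 c2 f mouse i = replies i"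
proof (induction i rule: less_induct)
  case (less i)
  show ?case
  proof (cases i rule: play.cases)
    case (3 k)
    have "cat_pos c1 c2 f (replies (Suc k)) (Suc (Suc k)) = cat (Suc (Suc k))"
      "cat_pos c1 c2 f (replies k) (Suc k) = cat (Suc k)" by (simp_all add: cat_def)
    with 3 less[of k] less[of "Suc k"] show ?thesis
      by (simp add: play_Suc_Suc(2) mouse_closer_iff)
  qed simp_all
qed

lemma cat_seq_mouse: "cat_seq (spider_adj t) c1 c2 f mouse i = cat i"
  by (simp add: cat_seq_def answers_mouse cat_def)

lemma bit_seq_mouse: "bit_seq (spider_adj t) c1 c2 f mouse i \<longleftrightarrow> mouse_move i \<le> cat_rise i"
  by (auto simp: bit_seq_def cat_seq_mouse mouse_closer_iff mouse_move_def cat_rise_def)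

lemma mouse_step:
  assumes "1 \<le> i"
  shows "mouse (Suc i) = mouse i \<or> spider_adj t (mouse i) (mouse (Suc i))"
proof -
  have next_state: "excursion (Suc i) = excursion_next (excursion i) (cat_rise (Suc i))"
    using excursion_next_step[of "Suc i"] assms by simp
  consider "excursion i = 0" "excursion (Suc i) = 0"
    | "(excursion i = 0) \<noteq> (excursion (Suc i) = 0)"
    | "excursion i \<noteq> 0" "excursion (Suc i) = Suc (excursion i)"
    using next_state by (auto simp: excursion_next_def split: if_splits)
  then show ?thesis
  proof cases
    case 1
    then show ?thesis by (simp add: mouse_def)
  next
    case 2
    then have "spider_dist t (mouse i) (mouse (Suc i)) = 1"
      using t_pos by (auto simp: mouse_def spider_dist_def)
    then show ?thesis using mouse_in_V by (simp add: spider_adj_def)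
  next
    case 3
    then show ?thesis by (simp add: mouse_def)
  qed
qed

lemma mouse_seq_mouse: "mouse_seq {..<t^2+1} (spider_adj t) mouse"
  unfolding mouse_seq_def using mouse_in_V mouse_step by auto

definition gain :: "nat \<Rightarrow> int" where
  "gain i = shadow_move (mouse_move i) (cat_rise i) - mouse_move i"

lemma mouse_move_bounds: "-1 \<le> mouse_move i" "mouse_move i \<le> 1"
  using excursion_depth_bounds[of "excursion i"] excursion_depth_bounds[of "excursion (i - 1)"]
  by (simp_all add: mouse_move_def)

lemma gain_bounds: "0 \<le> gain i" "gain i \<le> 2"
  using shadow_move_bounds(3,4)[OF mouse_move_bounds(1)[of i] mouse_move_bounds(2)[of i], of "cat_rise i"]
  by (simp_all add: gain_def)

lemma gain_potential:
  assumes "2 \<le> i"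
  shows "2 * gain i + excursion_potential (excursion i) - excursion_potential (excursion (i - 1)) \<ge> 1"
  using excursion_gain[OF excursion_le_3, of "i - 1" "cat_rise i"]
  unfolding excursion_next_step[OF assms, symmetric] by (simp add: gain_def mouse_move_def)

definition escape_dist :: int where
  "escape_dist = int (2 * q + 1)"

text \<open>The shadow's lead in depth over the mouse. It stops growing once it reaches
  \<open>escape_dist\<close>, which keeps the shadow within its leg.\<close>

fun shadow_offset :: "nat \<Rightarrow> int \<Rightarrow> nat \<Rightarrow> int" where
  "shadow_offset s h0 0 = h0"
| "shadow_offset s h0 (Suc i) =
     (if Suc i \<le> s \<or> escape_dist \<le> shadow_offset s h0 i then shadow_offset s h0 i
      else shadow_offset s h0 i + gain (Suc i))"

lemma shadow_offset_before: "i \<le> s \<Longrightarrow> shadow_offset s h0 i = h0"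
  by (induction i) auto

lemma shadow_offset_ge: "h0 \<le> shadow_offset s h0 i"
  by (induction i) (auto simp: gain_bounds(1) add_increasing2)

lemma shadow_offset_le: "shadow_offset s h0 i \<le> max h0 (escape_dist + 1)"
proof (induction i)
  case (Suc i)
  then show ?case using gain_bounds(2)[of "Suc i"] by auto
qed simp

lemma shadow_offset_potential:
  assumes "1 \<le> s" "s \<le> j"
  shows "escape_dist \<le> shadow_offset s h0 j \<or>
    2 * (shadow_offset s h0 j - h0) \<ge>
      int (j - s) + excursion_potential (excursion s) - excursion_potential (excursion j)"
  using assms(2)
proof (induction j)
  case (Suc j)
  show ?case
  proof (cases "Suc j = s")
    case True
    then show ?thesis by (simp add: shadow_offset_before)
  next
    case False
    with Suc.prems have "s \<le> j" by simp
    show ?thesis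
    proof (cases "escape_dist \<le> shadow_offset s h0 j")
      case False
      with \<open>s \<le> j\<close> have "shadow_offset s h0 (Suc j) = shadow_offset s h0 j + gain (Suc j)" by simp
      moreover have "2 * gain (Suc j) + excursion_potential (excursion (Suc j))
          - excursion_potential (excursion j) \<ge> 1"
        using gain_potential[of "Suc j"] assms(1) \<open>s \<le> j\<close> by simp
      ultimately show ?thesis using Suc.IH[OF \<open>s \<le> j\<close>] False \<open>s \<le> j\<close> by simp
    qed (use \<open>s \<le> j\<close> in simp)
  qed
qed (use assms in simp)

definition shadow_depth :: "nat \<Rightarrow> int \<Rightarrow> nat \<Rightarrow> int" where
  "shadow_depth s h0 i = excursion_depth (excursion i) + shadow_offset s h0 i"

lemma shadow_depth_step:
  fixes h0 :: int
  assumes "s < i"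
  defines "\<delta> \<equiv> shadow_depth s h0 i - shadow_depth s h0 (i - 1)"
  shows "\<bar>\<delta>\<bar> \<le> 1" "\<delta> \<le> cat_rise i \<longleftrightarrow> mouse_move i \<le> cat_rise i"
proof -
  have "shadow_offset s h0 i = shadow_offset s h0 (i - 1) \<or>
      shadow_offset s h0 i = shadow_offset s h0 (i - 1) + gain i"
    using assms(1) by (cases i) auto
  then have "\<delta> = mouse_move i \<or> \<delta> = shadow_move (mouse_move i) (cat_rise i)"
    by (auto simp: \<delta>_def shadow_depth_def gain_def mouse_move_def)
  then show "\<bar>\<delta>\<bar> \<le> 1" "\<delta> \<le> cat_rise i \<longleftrightarrow> mouse_move i \<le> cat_rise i"
    using mouse_move_bounds[of i]
      shadow_move_bounds(1,2)[OF mouse_move_bounds(1)[of i] mouse_move_bounds(2)[of i], of "cat_rise i"]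
      shadow_move_le_iff[OF mouse_move_bounds(2)[of i], of "cat_rise i"] by auto
qed

lemma escape_dist_bounds: "0 \<le> escape_dist" "escape_dist + 2 \<le> int t"
  using t_eq q_pos by (simp_all add: escape_dist_def)

definition shadow :: "nat \<Rightarrow> int \<Rightarrow> nat \<Rightarrow> nat \<Rightarrow> nat" where
  "shadow s h0 L i = (if i < s then mouse i else spider_vertex t L (nat (shadow_depth s h0 i)))"

text \<open>At time
  \<open>s\<close> it must be where the mouse is, except for \<open>s = 1\<close>, where no answer constrains it.\<close>

context
  fixes s :: nat and h0 :: int and L :: nat
  assumes start: "1 \<le> s" "excursion s = 0"
    and h0: "0 \<le> h0" "h0 \<le> escape_dist" "s = 1 \<or> h0 = 0"
    and L: "L < t"
begin

lemma shadow_depth_bounds: "0 \<le> shadow_depth s h0 i" "nat (shadow_depth s h0 i) \<le> t"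
  using shadow_offset_ge[of h0 s i] shadow_offset_le[of s h0 i] h0 escape_dist_bounds
    excursion_depth_bounds[of "excursion i"]
  by (auto simp: shadow_depth_def)

lemma shadow_late: "s \<le> i \<Longrightarrow> shadow s h0 L i = spider_vertex t L (nat (shadow_depth s h0 i))"
  by (simp add: shadow_def)

lemma shadow_early: "2 \<le> i \<Longrightarrow> i \<le> s \<Longrightarrow> shadow s h0 L i = mouse i"
proof (cases "i = s")
  case True
  assume "2 \<le> i"
  with True h0(3) start(2) show ?thesis
    by (simp add: shadow_def shadow_depth_def shadow_offset_before excursion_depth_def mouse_def)
qed (simp add: shadow_def)

lemma shadow_in_V: "shadow s h0 L i < t^2+1"
  using mouse_in_V spider_vertex_less[OF L shadow_depth_bounds(2)] by (simp add: shadow_def)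

lemma shadow_depth_late: "s \<le> i \<Longrightarrow> int (spider_depth t (shadow s h0 L i)) = shadow_depth s h0 i"
  using shadow_depth_bounds[of i] by (simp add: shadow_late)

lemma dist_cat_shadow:
  assumes "s \<le> i" "spider_leg t (cat i) \<noteq> L"
  shows "int (gdist (spider_adj t) (cat i) (shadow s h0 L i)) = cat_depth i + shadow_depth s h0 i"
proof -
  have "shadow s h0 L i = 0 \<or> spider_leg t (cat i) \<noteq> spider_leg t (shadow s h0 L i)"
    using assms shadow_depth_bounds(2)[of i] by (auto simp: shadow_late)
  then have "spider_dist t (cat i) (shadow s h0 L i) =
      spider_depth t (cat i) + spider_depth t (shadow s h0 L i)"
    by (auto intro: spider_dist_other_leg)
  then show ?thesis
    using shadow_depth_late[OF assms(1)]
    by (simp add: gdist_spider[OF t_pos cat_in_V shadow_in_V] cat_depth_def)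
qed

lemma shadow_step:
  assumes "2 \<le> i"
  shows "shadow s h0 L i = shadow s h0 L (i - 1) \<or> spider_adj t (shadow s h0 L (i - 1)) (shadow s h0 L i)"
proof (cases "i \<le> s")
  case True
  moreover have "i - 1 < s" using True assms by simp
  ultimately have "shadow s h0 L i = mouse i" "shadow s h0 L (i - 1) = mouse (i - 1)"
    using assms by (simp add: shadow_early, simp add: shadow_def)
  moreover have "Suc (i - 1) = i" "1 \<le> i - 1" using assms by simp_all
  ultimately show ?thesis using mouse_step[of "i - 1"] by metis
next
  case False
  define a b where "a = nat (shadow_depth s h0 (i - 1))" and "b = nat (shadow_depth s h0 i)"
  have "\<bar>shadow_depth s h0 i - shadow_depth s h0 (i - 1)\<bar> \<le> 1"
    using False by (intro shadow_depth_step) simp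
  moreover have "int a = shadow_depth s h0 (i - 1)" "int b = shadow_depth s h0 i"
    using shadow_depth_bounds(1) by (simp_all add: a_def b_def)
  ultimately have "a \<le> b + 1" "b \<le> a + 1" by linarith+
  moreover have "spider_dist t (shadow s h0 L (i - 1)) (shadow s h0 L i) = max a b - min a b"
    using False shadow_depth_bounds(2) by (simp add: a_def b_def shadow_late spider_dist_vertex)
  ultimately have "spider_dist t (shadow s h0 L (i - 1)) (shadow s h0 L i) \<le> 1" by linarith
  then show ?thesis using shadow_in_V spider_eq_or_adj by metis
qed

lemma shadow_closer_iff:
  assumes "s < i" "spider_leg t (cat i) \<noteq> L" "spider_leg t (cat (i - 1)) \<noteq> L"
  shows "gdist (spider_adj t) (cat i) (shadow s h0 L i) \<le>
           gdist (spider_adj t) (cat (i - 1)) (shadow s h0 L (i - 1)) \<longleftrightarrow>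
         bit_seq (spider_adj t) c1 c2 f mouse i"
proof -
  have "s \<le> i - 1" using assms(1) by simp
  have "gdist (spider_adj t) (cat i) (shadow s h0 L i) \<le>
          gdist (spider_adj t) (cat (i - 1)) (shadow s h0 L (i - 1)) \<longleftrightarrow>
        shadow_depth s h0 i - shadow_depth s h0 (i - 1) \<le> cat_rise i"
    using dist_cat_shadow[OF _ assms(2)] dist_cat_shadow[OF \<open>s \<le> i - 1\<close> assms(3)] assms(1)
    unfolding of_nat_le_iff[symmetric, where 'a = int] by (auto simp: cat_rise_def)
  also have "\<dots> \<longleftrightarrow> bit_seq (spider_adj t) c1 c2 f mouse i"
    using shadow_depth_step(2)[OF assms(1)] by (simp add: bit_seq_mouse)
  finally show ?thesis .
qed

lemma shadow_in_Mset:
  assumes "\<forall>i\<in>{s..j}. spider_leg t (cat i) \<noteq> L"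
  shows "shadow s h0 L j \<in> Mset {..<t^2+1} (spider_adj t) c1 c2 f mouse j"
proof (rule Mset_memberI)
  fix i assume i: "2 \<le> i" "i \<le> j"
  show "(gdist (spider_adj t) (cat_seq (spider_adj t) c1 c2 f mouse i) (shadow s h0 L i) \<le>
         gdist (spider_adj t) (cat_seq (spider_adj t) c1 c2 f mouse (i - 1)) (shadow s h0 L (i - 1)))
        \<longleftrightarrow> bit_seq (spider_adj t) c1 c2 f mouse i"
  proof (cases "i \<le> s")
    case True
    moreover have "i - 1 < s" using True i by simp
    ultimately have "shadow s h0 L i = mouse i" "shadow s h0 L (i - 1) = mouse (i - 1)"
      using i by (simp add: shadow_early, simp add: shadow_def)
    then show ?thesis by (simp add: bit_seq_def)
  next
    case False
    with i have "s < i" "i \<in> {s..j}" "i - 1 \<in> {s..j}" by auto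
    with assms have "s < i" "spider_leg t (cat i) \<noteq> L" "spider_leg t (cat (i - 1)) \<noteq> L"
      by blast+
    then show ?thesis unfolding cat_seq_mouse by (rule shadow_closer_iff)
  qed
qed (use shadow_in_V in simp, erule shadow_step)

lemma shadow_far: "s \<le> j \<Longrightarrow> shadow_offset s h0 j \<le> int (spider_dist t (mouse j) (shadow s h0 L j))"
  using spider_depth_le_dist[of t "shadow s h0 L j" "mouse j"] shadow_depth_late[of j] mouse_depth[of j]
  by (simp add: shadow_depth_def)

end

lemma unused_leg:
  assumes "Suc j - s < t"
  obtains L where "L < t" "\<forall>i\<in>{s..j}. spider_leg t (cat i) \<noteq> L"
  using ex_less_notin_image[of "{s..j}" t "\<lambda>i. spider_leg t (cat i)"] assms by auto

text \<open>For \<open>j \<le> 4 q + 3\<close> the shadow starts at time \<open>1\<close> already at depth \<open>escape_dist\<close>. Later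
  it starts at the centre together with the mouse, at a time \<open>s\<close> with \<open>j - s \<ge> 4 q + 3\<close>, which
  the potential argument needs. In both cases the window \<open>{s..j}\<close> is shorter than \<open>t\<close>, so
  some leg is not tested during it.\<close>

lemma far_point_in_Mset:
  assumes "1 \<le> j"
  shows "\<exists>v\<in>Mset {..<t^2+1} (spider_adj t) c1 c2 f mouse j. escape_dist \<le> int (spider_dist t (mouse j) v)"
proof (cases "j \<le> 4 * q + 3")
  case True
  then have "Suc j - 1 < t" using t_eq q_pos by simp
  then obtain L where L: "L < t" "\<forall>i\<in>{1..j}. spider_leg t (cat i) \<noteq> L" by (rule unused_leg)
  have "escape_dist \<le> shadow_offset 1 escape_dist j" by (rule shadow_offset_ge)
  then show ?thesis
    using shadow_in_Mset[OF _ _ _ _ _ L] shadow_far[OF _ _ _ _ _ L(1), of 1 escape_dist j]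
      escape_dist_bounds assms by force
next
  case False
  define T where "T = j - (4 * q + 3)"
  obtain s where s: "1 \<le> s" "s \<le> T" "T \<le> s + 3" "excursion s = 0"
  proof (cases "excursion T")
    case 0
    with False show ?thesis using that[of T] by (simp add: T_def)
  next
    case (Suc r)
    with excursion_began[OF this] excursion_le_3[of T]
    have "1 \<le> T - Suc r" "T - Suc r \<le> T" "T \<le> T - Suc r + 3" "excursion (T - Suc r) = 0"
      by auto
    then show ?thesis by (rule that)
  qed
  have "Suc j - s < t" "s \<le> j" "4 * int q + 3 \<le> int (j - s)"
    using s False t_eq q_pos by (simp_all add: T_def)
  then obtain L where L: "L < t" "\<forall>i\<in>{s..j}. spider_leg t (cat i) \<noteq> L" by (blast intro: unused_leg)
  have "escape_dist \<le> shadow_offset s 0 j"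
    using shadow_offset_potential[OF s(1) \<open>s \<le> j\<close>, of 0] \<open>4 * int q + 3 \<le> int (j - s)\<close> s(4)
      excursion_potential_le_1[of "excursion j"]
    by (auto simp: escape_dist_def excursion_potential_def)
  then show ?thesis
    using shadow_in_Mset[OF s(1,4) _ _ _ L] shadow_far[OF s(1,4) _ _ _ L(1) \<open>s \<le> j\<close>]
      escape_dist_bounds by force
qed

end

lemma rad_spider_ge:
  assumes "0 < t" "W \<subseteq> {..<t^2+1}" "x \<in> W" "y \<in> W"
  shows "spider_dist t x y \<le> 2 * rad {..<t^2+1} (spider_adj t) W"
proof -
  have xy: "x < t^2+1" "y < t^2+1" using assms(2-4) by auto
  have "gdist (spider_adj t) x y \<le> 2 * rad {..<t^2+1} (spider_adj t) W"
  proof (rule dist_le_twice_rad[OF _ assms(2-4)])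
    fix v assume "v \<in> {..<t^2+1}"
    with assms(1) xy show "gdist (spider_adj t) x y \<le> gdist (spider_adj t) v x + gdist (spider_adj t) v y"
      using spider_dist_triangle[of t x y v] spider_dist_commute[of t x v]
      by (simp add: gdist_spider)
  qed simp
  with assms(1) xy show ?thesis by (simp add: gdist_spider)
qed

theorem proposition3p1:
  fixes t :: nat
  assumes "t > 0" and "12 dvd t"
  shows "\<exists>E :: nat \<Rightarrow> nat \<Rightarrow> bool. is_tree {..<t^2+1} E \<and>
           (\<forall>c1 c2 f. cat_strategy {..<t^2+1} c1 c2 f \<longrightarrow>
              (\<exists>m. mouse_seq {..<t^2+1} E m \<and>
                   (\<forall>i\<ge>1. real (rad {..<t^2+1} E (Mset {..<t^2+1} E c1 c2 f m i)) > real t / 12)))"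
proof (intro exI[of _ "spider_adj t"] conjI allI impI)
  show "is_tree {..<t^2+1} (spider_adj t)" using is_tree_spider[OF assms(1)] .
next
  fix c1 c2 f assume "cat_strategy {..<t^2+1} c1 c2 f"
  moreover obtain q where "t = 12 * q" "0 < q" using assms by auto
  ultimately interpret spider_game t q c1 c2 f by unfold_locales
  show "\<exists>m. mouse_seq {..<t^2+1} (spider_adj t) m \<and>
      (\<forall>i\<ge>1. real (rad {..<t^2+1} (spider_adj t) (Mset {..<t^2+1} (spider_adj t) c1 c2 f m i)) > real t / 12)"
  proof (intro exI[of _ mouse] conjI allI impI)
    fix i :: nat assume "1 \<le> i"
    let ?M = "Mset {..<t^2+1} (spider_adj t) c1 c2 f mouse i"
    obtain v where "v \<in> ?M" "escape_dist \<le> int (spider_dist t (mouse i) v)"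
      using far_point_in_Mset[OF \<open>1 \<le> i\<close>] by blast
    moreover have "spider_dist t (mouse i) v \<le> 2 * rad {..<t^2+1} (spider_adj t) ?M"
      using rad_spider_ge[OF t_pos Mset_subset[OF \<open>1 \<le> i\<close>] mouse_in_Mset[OF mouse_seq_mouse \<open>1 \<le> i\<close>]]
        \<open>v \<in> ?M\<close> .
    ultimately have "q < rad {..<t^2+1} (spider_adj t) ?M" by (simp add: escape_dist_def)
    then show "real (rad {..<t^2+1} (spider_adj t) ?M) > real t / 12" using t_eq by simp
  qed (rule mouse_seq_mouse)
qed

end
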